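(* Let $|\Phi\rangle=\sum_{z\in F^d,y\in F}\phi_{z,y}|z\rangle|y\rangle$ be a pure state with $\phi_z:=\big(\sum_y|\phi_{z,y}|^2\big)^{1/2}>0$ for every $z\in F^d$. Let $\gamma=V_{QLDT}(|\Phi\rangle,G)$ and $N=\frac{|F|^d-1}{|F|-1}$, and assume $\gamma\ge |F|^{-1}$. Then $$\Big(\gamma-\frac1{|F|}\Big)^2\le \frac{1}{|F|^{d}N}\sum_{z\in F^d}\sum_{\ell\in L(z)}\frac{|\phi_{z,g_\ell(z)}|^2}{\phi_z^2},$$ where $L(z)$ is the set of the $N$ lines containing $z$. Consequently there exists a (deterministic) function $f':F^d\to F$ with $\mathrm{Agr}[f',G]\ge(\gamma-|F|^{-1})^2$.
   Context: Setting. - $F$ is a finite field with $|F|=2^a$, $d\ge2$ and $r\ge0$ are integers; $\mathcal H_{d+1}=\mathbb C^{|F|^{d+1}}$ with basis $|z\rangle|y\rangle$, $z\in F^d$, $y\in F$. - $L$ is the set of lines of $F^d$. - $G=\{g_\ell\}_{\ell\in L}$ with each $g_\ell:\ell\to F$ a polynomial of degree $\le r$ along the line. Quantum low degree test. - Step I: uniformly random invertible linear $E:F^d\to F^d$. Apply $|z\rangle|y\rangle\mapsto|E(z)\rangle|y\rangle$, then measure the first $d-1$ registers with outcome $b$, obtaining the line $\ell=\{u+(v-u)t\}$ with $E(u)=(b,0)$, $E(v)=(b,1)$, and the collapsed state $|\Phi'\rangle$ of the last two registers. - Step II: with $|e_1\rangle=|F|^{-1/2}\sum_t|t\rangle|g_\ell(u+(v-u)t)\rangle$,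 accept with probability $|\langle e_1|\Phi'\rangle|^2$. - $V_{QLDT}(|\Phi\rangle,G)$ is the overall acceptance probability. Agreement. For $f':F^d\to F$: $\mathrm{Agr}[f',g_\ell]=\Pr_{z\in\ell}[f'(z)=g_\ell(z)]$ and $\mathrm{Agr}[f',G]=\mathbb E_{\ell\in L}\mathrm{Agr}[f',g_\ell]$, all under uniform distributions. *)

theory Defs
  imports Complex_Main "HOL-Computational_Algebra.Polynomial"
begin

text \<open>Points of F^d are represented as functions nat => F vanishing at all indices >= d;
  coordinate d-1 is the last register.\<close>

definition vspace :: "nat \<Rightarrow> (nat \<Rightarrow> 'f::zero) set" where
  "vspace d = {x. \<forall>i. d \<le> i \<longrightarrow> x i = 0}"

definition mat_apply :: "nat \<Rightarrow> (nat \<Rightarrow> nat \<Rightarrow> 'f::comm_ring_1) \<Rightarrow> (nat \<Rightarrow> 'f) \<Rightarrow> (nat \<Rightarrow> 'f)" where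
  "mat_apply d M x = (\<lambda>i. if i < d then (\<Sum>j<d. M i j * x j) else 0)"

definition GL :: "nat \<Rightarrow> (nat \<Rightarrow> nat \<Rightarrow> 'f::field) set" where
  "GL d = {M. (\<forall>i j. d \<le> i \<or> d \<le> j \<longrightarrow> M i j = 0)
              \<and> bij_betw (mat_apply d M) (vspace d) (vspace d)}"

definition line_through :: "(nat \<Rightarrow> 'f::comm_ring_1) \<Rightarrow> (nat \<Rightarrow> 'f) \<Rightarrow> (nat \<Rightarrow> 'f) set" where
  "line_through u w = {(\<lambda>i. u i + t * w i) | t. True}"

definition lines :: "nat \<Rightarrow> (nat \<Rightarrow> 'f::comm_ring_1) set set" where
  "lines d = {line_through u w | u w. u \<in> vspace d \<and> w \<in> vspace d \<and> w \<noteq> (\<lambda>_. 0)}"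

definition low_degree_family :: "nat \<Rightarrow> nat \<Rightarrow> ((nat \<Rightarrow> 'f::field) set \<Rightarrow> (nat \<Rightarrow> 'f) \<Rightarrow> 'f) \<Rightarrow> bool" where
  "low_degree_family d r g \<longleftrightarrow>
     (\<forall>l\<in>lines d. \<exists>u w p. u \<in> vspace d \<and> w \<in> vspace d \<and> w \<noteq> (\<lambda>_. 0) \<and>
        l = line_through u w \<and> degree p \<le> r \<and> (\<forall>t. g l (\<lambda>i. u i + t * w i) = poly p t))"

definition amp_norm :: "((nat \<Rightarrow> 'f::finite) \<Rightarrow> 'f \<Rightarrow> complex) \<Rightarrow> (nat \<Rightarrow> 'f) \<Rightarrow> real" where
  "amp_norm \<phi> z = sqrt (\<Sum>y\<in>UNIV. (cmod (\<phi> z y))\<^sup>2)"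

text \<open>Step I: E^{-1}, applied to the register value (b,s) with b the measured outcome.\<close>
definition Einv :: "nat \<Rightarrow> (nat \<Rightarrow> nat \<Rightarrow> 'f::field) \<Rightarrow> (nat \<Rightarrow> 'f) \<Rightarrow> (nat \<Rightarrow> 'f)" where
  "Einv d M = inv_into (vspace d) (mat_apply d M)"

definition bt :: "nat \<Rightarrow> (nat \<Rightarrow> 'f) \<Rightarrow> 'f \<Rightarrow> (nat \<Rightarrow> 'f)" where
  "bt d b s = b(d - 1 := s)"

text \<open>Probability of outcome b when measuring the first d-1 registers of E|Phi>.\<close>
definition meas_prob :: "nat \<Rightarrow> ((nat \<Rightarrow> 'f::{finite,field}) \<Rightarrow> 'f \<Rightarrow> complex) \<Rightarrow> (nat \<Rightarrow> nat \<Rightarrow> 'f) \<Rightarrow> (nat \<Rightarrow> 'f) \<Rightarrow> real" where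
  "meas_prob d \<phi> M b = (\<Sum>s\<in>UNIV. \<Sum>y\<in>UNIV. (cmod (\<phi> (Einv d M (bt d b s)) y))\<^sup>2)"

text \<open>Collapsed state |Phi'> of the last two registers.\<close>
definition collapsed :: "nat \<Rightarrow> ((nat \<Rightarrow> 'f::{finite,field}) \<Rightarrow> 'f \<Rightarrow> complex) \<Rightarrow> (nat \<Rightarrow> nat \<Rightarrow> 'f) \<Rightarrow> (nat \<Rightarrow> 'f) \<Rightarrow> 'f \<Rightarrow> 'f \<Rightarrow> complex" where
  "collapsed d \<phi> M b s y = \<phi> (Einv d M (bt d b s)) y / complex_of_real (sqrt (meas_prob d \<phi> M b))"

definition line_u :: "nat \<Rightarrow> (nat \<Rightarrow> nat \<Rightarrow> 'f::field) \<Rightarrow> (nat \<Rightarrow> 'f) \<Rightarrow> (nat \<Rightarrow> 'f)" where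
  "line_u d M b = Einv d M (bt d b 0)"

definition line_v :: "nat \<Rightarrow> (nat \<Rightarrow> nat \<Rightarrow> 'f::field) \<Rightarrow> (nat \<Rightarrow> 'f) \<Rightarrow> (nat \<Rightarrow> 'f)" where
  "line_v d M b = Einv d M (bt d b 1)"

definition measured_line :: "nat \<Rightarrow> (nat \<Rightarrow> nat \<Rightarrow> 'f::field) \<Rightarrow> (nat \<Rightarrow> 'f) \<Rightarrow> (nat \<Rightarrow> 'f) set" where
  "measured_line d M b = line_through (line_u d M b) (\<lambda>i. line_v d M b i - line_u d M b i)"

definition e1 :: "nat \<Rightarrow> ((nat \<Rightarrow> 'f::{finite,field}) set \<Rightarrow> (nat \<Rightarrow> 'f) \<Rightarrow> 'f) \<Rightarrow> (nat \<Rightarrow> nat \<Rightarrow> 'f) \<Rightarrow> (nat \<Rightarrow> 'f) \<Rightarrow> 'f \<Rightarrow> 'f \<Rightarrow> complex" where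
  "e1 d g M b t y =
     (if y = g (measured_line d M b)
               (\<lambda>i. line_u d M b i + (line_v d M b i - line_u d M b i) * t)
      then complex_of_real (1 / sqrt (real (card (UNIV :: 'f set)))) else 0)"

definition accept_prob :: "nat \<Rightarrow> ((nat \<Rightarrow> 'f::{finite,field}) \<Rightarrow> 'f \<Rightarrow> complex) \<Rightarrow> ((nat \<Rightarrow> 'f) set \<Rightarrow> (nat \<Rightarrow> 'f) \<Rightarrow> 'f) \<Rightarrow> (nat \<Rightarrow> nat \<Rightarrow> 'f) \<Rightarrow> (nat \<Rightarrow> 'f) \<Rightarrow> real" where
  "accept_prob d \<phi> g M b =
     (cmod (\<Sum>t\<in>UNIV. \<Sum>y\<in>UNIV. cnj (e1 d g M b t y) * collapsed d \<phi> M b t y))\<^sup>2"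

definition V_QLDT :: "nat \<Rightarrow> ((nat \<Rightarrow> 'f::{finite,field}) \<Rightarrow> 'f \<Rightarrow> complex) \<Rightarrow> ((nat \<Rightarrow> 'f) set \<Rightarrow> (nat \<Rightarrow> 'f) \<Rightarrow> 'f) \<Rightarrow> real" where
  "V_QLDT d \<phi> g = (\<Sum>M\<in>GL d. \<Sum>b\<in>vspace (d - 1). meas_prob d \<phi> M b * accept_prob d \<phi> g M b) / real (card (GL d :: (nat \<Rightarrow> nat \<Rightarrow> 'f) set))"

definition Agr_line :: "((nat \<Rightarrow> 'f) \<Rightarrow> 'f) \<Rightarrow> (nat \<Rightarrow> 'f) set \<Rightarrow> ((nat \<Rightarrow> 'f) \<Rightarrow> 'f) \<Rightarrow> real" where
  "Agr_line f l gl = real (card {z\<in>l. f z = gl z}) / real (card l)"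

definition Agr :: "nat \<Rightarrow> ((nat \<Rightarrow> 'f::{finite,field}) \<Rightarrow> 'f) \<Rightarrow> ((nat \<Rightarrow> 'f) set \<Rightarrow> (nat \<Rightarrow> 'f) \<Rightarrow> 'f) \<Rightarrow> real" where
  "Agr d f g = (\<Sum>l\<in>lines d. Agr_line f l (g l)) / real (card (lines d :: (nat \<Rightarrow> 'f) set set))"

end

theory Submission
  imports Defs "HOL-Analysis.Convex"
begin

text \<open>For a fixed matrix \<open>E\<close> and outcome \<open>b\<close> the measured line is \<open>z t = z 0 + t w\<close> with
  \<open>w = E\<^sup>-\<^sup>1 e\<^sub>d\<close>, and \<open>p(b) acc(b) = |\<Sum>t. Y (z t)|\<^sup>2 / q\<close>, where \<open>Y z\<close> is the amplitude
  of \<open>\<Phi>\<close> at \<open>z\<close> on the value prescribed by the line. Summing over \<open>b\<close> expands the squares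
  into the autocorrelation \<open>\<Sum>z. \<Sum>s. Y z * cnj (Y (z + s w))\<close>. Its diagonal \<open>s = 0\<close> is at
  most \<open>\<parallel>\<Phi>\<parallel>\<^sup>2 = 1\<close> and accounts for the \<open>1/q\<close>. The off-diagonal part is averaged over
  \<open>w\<close>, which is uniform over the nonzero vectors because \<open>GL d\<close> acts transitively on them,
  and Cauchy--Schwarz bounds it by the weighted sum in the statement. For the second claim
  let \<open>f' z\<close> be the value prescribed at \<open>z\<close> by the most lines through \<open>z\<close>: each inner sum
  over lines is at most the number of lines through \<open>z\<close> agreeing with \<open>f'\<close>, and double
  counting incidences turns this into \<open>Agr d f' g\<close>.\<close>

section \<open>Coordinate space and linear maps\<close>

lemma finite_vspace: "finite (vspace d :: (nat \<Rightarrow> 'f::{finite,zero}) set)"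
proof -
  have "vspace d = {x. \<forall>i. (i \<in> {..<d} \<longrightarrow> x i \<in> (UNIV::'f set)) \<and> (i \<notin> {..<d} \<longrightarrow> x i = 0)}"
    by (auto simp: vspace_def)
  then show ?thesis using finite_set_of_finite_funs[of "{..<d}" "UNIV::'f set" 0] by simp
qed

lemma zero_in_vspace: "(\<lambda>_. 0) \<in> vspace d"
  by (simp add: vspace_def)

lemma bij_betw_vspace_Suc:
  "bij_betw (\<lambda>(x, c). x(d := c)) (vspace d \<times> (UNIV::'f::zero set)) (vspace (Suc d))"
  by (rule bij_betw_byWitness[where f'="\<lambda>y. (y(d := 0), y d)"])
    (auto simp: vspace_def fun_eq_iff)

lemma card_vspace: "card (vspace d :: (nat \<Rightarrow> 'f::{finite,zero}) set) = card (UNIV::'f set) ^ d"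
proof (induction d)
  case 0
  have "vspace 0 = {(\<lambda>_. 0::'f)}" by (auto simp: vspace_def)
  then show ?case by simp
next
  case (Suc d)
  then show ?case
    using bij_betw_same_card[OF bij_betw_vspace_Suc[of d, where 'f='f]]
    by (simp add: card_cartesian_product mult.commute)
qed

definition vspace_linear :: "nat \<Rightarrow> ((nat \<Rightarrow> 'f::field) \<Rightarrow> (nat \<Rightarrow> 'f)) \<Rightarrow> bool" where
  "vspace_linear d f \<longleftrightarrow> (\<forall>x\<in>vspace d. f x \<in> vspace d) \<and>
     (\<forall>x\<in>vspace d. \<forall>y\<in>vspace d. \<forall>c. f (\<lambda>i. x i + c * y i) = (\<lambda>i. f x i + c * f y i))"

definition unit_vec :: "nat \<Rightarrow> nat \<Rightarrow> 'f::zero_neq_one" where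
  "unit_vec j = (\<lambda>i. if i = j then 1 else 0)"

definition matrix_of :: "nat \<Rightarrow> ((nat \<Rightarrow> 'f::field) \<Rightarrow> (nat \<Rightarrow> 'f)) \<Rightarrow> nat \<Rightarrow> nat \<Rightarrow> 'f" where
  "matrix_of d f = (\<lambda>i j. if i < d \<and> j < d then f (unit_vec j) i else 0)"

lemma unit_vec_in_vspace: "j < d \<Longrightarrow> unit_vec j \<in> vspace d"
  by (simp add: vspace_def unit_vec_def)

lemma unit_vec_nonzero: "unit_vec j \<noteq> (\<lambda>_. 0)"
  by (simp add: unit_vec_def fun_eq_iff)

lemma vspace_linear_in_vspace: "vspace_linear d f \<Longrightarrow> x \<in> vspace d \<Longrightarrow> f x \<in> vspace d"
  unfolding vspace_linear_def by blast

lemma vspace_linearD: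
  "vspace_linear d f \<Longrightarrow> x \<in> vspace d \<Longrightarrow> y \<in> vspace d \<Longrightarrow>
     f (\<lambda>i. x i + c * y i) = (\<lambda>i. f x i + c * f y i)"
  unfolding vspace_linear_def by blast

lemma vspace_linear_zero:
  assumes "vspace_linear d f"
  shows "f (\<lambda>_. 0) = (\<lambda>_. 0)"
proof -
  have "f (\<lambda>_. 0) = (\<lambda>i. f (\<lambda>_. 0) i + f (\<lambda>_. 0) i)"
    using vspace_linearD[OF assms zero_in_vspace zero_in_vspace, of 1] by simp
  then show ?thesis by (metis add_cancel_right_right)
qed

lemma vspace_linear_comp:
  "vspace_linear d f \<Longrightarrow> vspace_linear d g \<Longrightarrow> vspace_linear d (f \<circ> g)"
  unfolding vspace_linear_def by simp

lemma vspace_linear_mat_apply: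
  fixes M :: "nat \<Rightarrow> nat \<Rightarrow> 'f::field"
  shows "vspace_linear d (mat_apply d M)"
proof -
  have "(\<Sum>j<d. M i j * (x j + c * y j)) = (\<Sum>j<d. M i j * x j) + c * (\<Sum>j<d. M i j * y j)"
    for i c and x y :: "nat \<Rightarrow> 'f"
    by (simp add: sum.distrib sum_distrib_left distrib_left mult.left_commute)
  then show ?thesis
    by (simp add: vspace_linear_def mat_apply_def vspace_def fun_eq_iff)
qed

lemma vspace_linear_sum:
  assumes "vspace_linear d f" "finite J" "\<And>j. j \<in> J \<Longrightarrow> v j \<in> vspace d"
  shows "f (\<lambda>i. \<Sum>j\<in>J. c j * v j i) = (\<lambda>i. \<Sum>j\<in>J. c j * f (v j) i)"
  using assms(2,3)
proof (induction J rule: finite_induct)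
  case empty
  then show ?case using vspace_linear_zero[OF assms(1)] by simp
next
  case (insert a J)
  have S: "(\<lambda>i. \<Sum>j\<in>J. c j * v j i) \<in> vspace d"
    using insert.prems by (simp add: vspace_def)
  have "f (\<lambda>i. \<Sum>j\<in>insert a J. c j * v j i) = f (\<lambda>i. (\<Sum>j\<in>J. c j * v j i) + c a * v a i)"
    using insert.hyps by (simp add: add.commute)
  also have "\<dots> = (\<lambda>i. f (\<lambda>i. \<Sum>j\<in>J. c j * v j i) i + c a * f (v a) i)"
    using vspace_linearD[OF assms(1) S] insert.prems by simp
  finally show ?case
    using insert by (simp add: fun_eq_iff add.commute)
qed

lemma vspace_unit_vec_expansion:
  fixes x :: "nat \<Rightarrow> 'f::comm_semiring_1"
  assumes "x \<in> vspace d"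
  shows "(\<lambda>i. \<Sum>j<d. x j * unit_vec j i) = x"
proof
  fix i
  show "(\<Sum>j<d. x j * unit_vec j i) = x i"
    using assms by (cases "i < d") (simp_all add: unit_vec_def vspace_def if_distrib cong: if_cong)
qed

lemma mat_apply_matrix_of:
  assumes "vspace_linear d f" "x \<in> vspace d"
  shows "mat_apply d (matrix_of d f) x = f x"
proof -
  have "f x = f (\<lambda>i. \<Sum>j<d. x j * unit_vec j i)"
    using vspace_unit_vec_expansion[OF assms(2)] by simp
  also have "\<dots> = (\<lambda>i. \<Sum>j<d. x j * f (unit_vec j) i)"
    using vspace_linear_sum[OF assms(1)] unit_vec_in_vspace by blast
  finally have "f x = (\<lambda>i. \<Sum>j<d. x j * f (unit_vec j) i)" .
  moreover have "f x \<in> vspace d" using vspace_linear_in_vspace[OF assms] .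
  ultimately show ?thesis
    by (auto simp: mat_apply_def matrix_of_def vspace_def fun_eq_iff mult.commute)
qed

lemma matrix_of_mat_apply: "M \<in> GL d \<Longrightarrow> matrix_of d (mat_apply d M) = M"
  by (auto simp: matrix_of_def mat_apply_def unit_vec_def GL_def fun_eq_iff if_distrib cong: if_cong)

lemma GL_eqI:
  assumes "M \<in> GL d" "M' \<in> GL d" "\<And>x. x \<in> vspace d \<Longrightarrow> mat_apply d M x = mat_apply d M' x"
  shows "M = M'"
proof -
  have "matrix_of d (mat_apply d M) = matrix_of d (mat_apply d M')"
    using assms(3) unit_vec_in_vspace by (auto simp: matrix_of_def fun_eq_iff)
  then show ?thesis using matrix_of_mat_apply assms(1,2) by metis
qed

lemma matrix_of_in_GL:
  assumes "vspace_linear d f" "bij_betw f (vspace d) (vspace d)"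
  shows "matrix_of d f \<in> GL d"
proof -
  have "bij_betw (mat_apply d (matrix_of d f)) (vspace d) (vspace d)"
    using assms(2) mat_apply_matrix_of[OF assms(1)] by (simp cong: bij_betw_cong)
  then show ?thesis by (simp add: GL_def matrix_of_def)
qed

lemma GL_bij: "M \<in> GL d \<Longrightarrow> bij_betw (mat_apply d M) (vspace d) (vspace d)"
  by (simp add: GL_def)

context
  fixes M :: "nat \<Rightarrow> nat \<Rightarrow> 'f::field" and d :: nat
  assumes M: "M \<in> GL d"
begin

lemma bij_Einv: "bij_betw (Einv d M) (vspace d) (vspace d)"
  unfolding Einv_def using bij_betw_inv_into[OF GL_bij[OF M]] .

lemma Einv_in_vspace: "x \<in> vspace d \<Longrightarrow> Einv d M x \<in> vspace d"
  using bij_betw_apply[OF bij_Einv] .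

lemma Einv_eq_iff: "x \<in> vspace d \<Longrightarrow> y \<in> vspace d \<Longrightarrow> Einv d M x = y \<longleftrightarrow> mat_apply d M y = x"
  using GL_bij[OF M] unfolding Einv_def bij_betw_def by (auto simp: f_inv_into_f inv_into_f_f)

lemma vspace_linear_Einv: "vspace_linear d (Einv d M)"
  unfolding vspace_linear_def
proof (intro conjI ballI allI)
  fix x y :: "nat \<Rightarrow> 'f" and c
  assume x: "x \<in> vspace d" and y: "y \<in> vspace d"
  let ?X = "Einv d M x" and ?Y = "Einv d M y"
  have X: "?X \<in> vspace d" and Y: "?Y \<in> vspace d" using x y Einv_in_vspace by auto
  have "mat_apply d M (\<lambda>i. ?X i + c * ?Y i) = (\<lambda>i. mat_apply d M ?X i + c * mat_apply d M ?Y i)"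
    using vspace_linearD[OF vspace_linear_mat_apply X Y] .
  also have "\<dots> = (\<lambda>i. x i + c * y i)"
    using Einv_eq_iff[OF x X] Einv_eq_iff[OF y Y] by simp
  finally show "Einv d M (\<lambda>i. x i + c * y i) = (\<lambda>i. ?X i + c * ?Y i)"
    using Einv_eq_iff X Y x y by (simp add: vspace_def)
qed (rule Einv_in_vspace)

end

section \<open>Transitivity of the general linear group on nonzero vectors\<close>

definition rank_one_update :: "nat \<Rightarrow> (nat \<Rightarrow> 'f::field) \<Rightarrow> (nat \<Rightarrow> 'f) \<Rightarrow> (nat \<Rightarrow> 'f)" where
  "rank_one_update k c x = (\<lambda>i. x i + x k * c i)"

lemma vspace_linear_rank_one_update: "c \<in> vspace d \<Longrightarrow> vspace_linear d (rank_one_update k c)"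
  unfolding vspace_linear_def rank_one_update_def vspace_def by (auto simp: fun_eq_iff algebra_simps)

lemma bij_rank_one_update:
  fixes c :: "nat \<Rightarrow> 'f::{finite,field}"
  assumes "c \<in> vspace d" "1 + c k \<noteq> 0"
  shows "bij_betw (rank_one_update k c) (vspace d) (vspace d)"
proof -
  have "inj_on (rank_one_update k c) (vspace d)"
  proof (rule inj_onI)
    fix x y assume "rank_one_update k c x = rank_one_update k c y"
    then have e: "\<And>i. x i + x k * c i = y i + y k * c i" unfolding rank_one_update_def by metis
    have "(x k - y k) * (1 + c k) = 0" using e[of k] by (simp add: algebra_simps)
    then have "x k = y k" using assms(2) by simp
    then show "x = y" using e by (auto simp: fun_eq_iff)
  qed
  moreover have "rank_one_update k c ` vspace d \<subseteq> vspace d"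
    using vspace_linear_in_vspace[OF vspace_linear_rank_one_update[OF assms(1)]] by blast
  ultimately show ?thesis
    unfolding bij_betw_def using endo_inj_surj[OF finite_vspace] by blast
qed

text \<open>If \<open>w\<close> has a nonzero last coordinate one rank-one update suffices; otherwise first
  move \<open>unit_vec (d - 1)\<close> to \<open>w + unit_vec (d - 1)\<close> and then cancel the last coordinate
  using a nonzero coordinate \<open>k\<close> of \<open>w\<close>.\<close>

lemma exists_vspace_linear_bij_unit_vec_to:
  fixes w :: "nat \<Rightarrow> 'f::{finite,field}"
  assumes "d \<ge> 1" "w \<in> vspace d" "w \<noteq> (\<lambda>_. 0)"
  shows "\<exists>f. vspace_linear d f \<and> bij_betw f (vspace d) (vspace d) \<and> f (unit_vec (d - 1)) = w"
proof (cases "w (d - 1) = 0")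
  case False
  let ?c = "\<lambda>i. w i - unit_vec (d - 1) i"
  have c: "?c \<in> vspace d" using assms(1,2) unit_vec_in_vspace[of "d - 1" d] by (simp add: vspace_def)
  have "1 + ?c (d - 1) \<noteq> 0" using False by (simp add: unit_vec_def)
  moreover have "rank_one_update (d - 1) ?c (unit_vec (d - 1)) = w"
    by (simp add: rank_one_update_def unit_vec_def fun_eq_iff)
  ultimately show ?thesis using vspace_linear_rank_one_update[OF c] bij_rank_one_update[OF c] by blast
next
  case True
  obtain k where k: "w k \<noteq> 0" using assms(3) by auto
  with True have "k \<noteq> d - 1" by auto
  let ?c = "\<lambda>i. - (unit_vec (d - 1) i / w k)"
  have c: "?c \<in> vspace d" using assms(1) unit_vec_in_vspace[of "d - 1" d] by (auto simp: vspace_def)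
  let ?f = "rank_one_update k ?c \<circ> rank_one_update (d - 1) w"
  have "vspace_linear d ?f"
    using vspace_linear_comp vspace_linear_rank_one_update[OF c] vspace_linear_rank_one_update[OF assms(2)]
    by blast
  moreover have "bij_betw ?f (vspace d) (vspace d)"
    using bij_betw_trans[OF bij_rank_one_update[OF assms(2)] bij_rank_one_update[OF c]]
      True \<open>k \<noteq> d - 1\<close> by (simp add: unit_vec_def)
  moreover have "?f (unit_vec (d - 1)) = w"
    using k \<open>k \<noteq> d - 1\<close> by (simp add: rank_one_update_def unit_vec_def fun_eq_iff)
  ultimately show ?thesis by blast
qed

lemma finite_GL: "finite (GL d :: (nat \<Rightarrow> nat \<Rightarrow> 'f::{finite,field}) set)"
proof (rule finite_subset)
  show "GL d \<subseteq> {M. \<forall>i. (i \<in> {..<d} \<longrightarrow> M i \<in> (vspace d :: (nat \<Rightarrow> 'f) set)) \<and> (i \<notin> {..<d} \<longrightarrow> M i = (\<lambda>_. 0))}"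
    by (auto simp: GL_def vspace_def fun_eq_iff)
  show "finite \<dots>"
    by (rule finite_set_of_finite_funs) (simp_all add: finite_vspace)
qed

text \<open>Precomposition with \<open>f\<close> injects the matrices sending \<open>y\<close> to \<open>t\<close> into those sending \<open>x\<close> to \<open>t\<close>.\<close>

lemma card_GL_fiber_le:
  fixes f :: "(nat \<Rightarrow> 'f::{finite,field}) \<Rightarrow> (nat \<Rightarrow> 'f)"
  assumes f: "vspace_linear d f" "bij_betw f (vspace d) (vspace d)" and "x \<in> vspace d" "f x = y"
  shows "card {M\<in>GL d. mat_apply d M y = t} \<le> card {M\<in>GL d. mat_apply d M x = t}"
proof -
  let ?P = "\<lambda>M. matrix_of d (mat_apply d M \<circ> f)"
  have lin: "vspace_linear d (mat_apply d M \<circ> f)" for M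
    using vspace_linear_comp[OF vspace_linear_mat_apply f(1)] .
  have P_apply: "mat_apply d (?P M) z = mat_apply d M (f z)" if "z \<in> vspace d" for M z
    using mat_apply_matrix_of[OF lin that] by simp
  have "inj_on ?P {M\<in>GL d. mat_apply d M y = t}"
  proof (rule inj_onI)
    fix M M' assume "M \<in> {M\<in>GL d. mat_apply d M y = t}" "M' \<in> {M\<in>GL d. mat_apply d M y = t}"
      and e: "?P M = ?P M'"
    show "M = M'"
    proof (rule GL_eqI)
      show "M \<in> GL d" "M' \<in> GL d" using \<open>M \<in> _\<close> \<open>M' \<in> _\<close> by auto
      fix z :: "nat \<Rightarrow> 'f" assume "z \<in> vspace d"
      then obtain z' where "z' \<in> vspace d" "z = f z'"
        using f(2) by (metis bij_betw_iff_bijections)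
      then show "mat_apply d M z = mat_apply d M' z" using P_apply e by metis
    qed
  qed
  moreover have "?P ` {M\<in>GL d. mat_apply d M y = t} \<subseteq> {M\<in>GL d. mat_apply d M x = t}"
    using matrix_of_in_GL[OF lin bij_betw_trans[OF f(2) GL_bij]] P_apply[OF \<open>x \<in> vspace d\<close>] \<open>f x = y\<close>
    by auto
  ultimately show ?thesis by (rule card_inj_on_le) (simp add: finite_GL)
qed

lemma card_GL_fiber_eq:
  fixes w :: "nat \<Rightarrow> 'f::{finite,field}" and d :: nat
  defines "e \<equiv> unit_vec (d - 1) :: nat \<Rightarrow> 'f"
  assumes "d \<ge> 1" "w \<in> vspace d" "w \<noteq> (\<lambda>_. 0)"
  shows "card {M\<in>GL d. mat_apply d M w = e} = card {M\<in>GL d. mat_apply d M e = e}"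
proof (rule antisym)
  obtain f where f: "vspace_linear d f" "bij_betw f (vspace d) (vspace d)" "f e = w"
    using exists_vspace_linear_bij_unit_vec_to[OF assms(2-4)] unfolding e_def by blast
  have e: "e \<in> vspace d" using assms(2) unfolding e_def by (intro unit_vec_in_vspace) simp
  show "card {M\<in>GL d. mat_apply d M w = e} \<le> card {M\<in>GL d. mat_apply d M e = e}"
    by (rule card_GL_fiber_le[OF f(1,2) e f(3)])
  let ?N = "matrix_of d f"
  have N: "?N \<in> GL d" using matrix_of_in_GL[OF f(1,2)] .
  have "Einv d ?N w = e"
    using Einv_eq_iff[OF N assms(3) e] mat_apply_matrix_of[OF f(1) e] f(3) by simp
  then show "card {M\<in>GL d. mat_apply d M e = e} \<le> card {M\<in>GL d. mat_apply d M w = e}"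
    using card_GL_fiber_le[OF vspace_linear_Einv[OF N] bij_Einv[OF N] assms(3)] by blast
qed

lemma sum_GL_Einv_unit_vec:
  fixes H :: "(nat \<Rightarrow> 'f::{finite,field}) \<Rightarrow> 'a::comm_ring_1" and d :: nat
  defines "e \<equiv> unit_vec (d - 1) :: nat \<Rightarrow> 'f"
  assumes "d \<ge> 1"
  shows "(\<Sum>M\<in>GL d. H (Einv d M e))
     = of_nat (card {M\<in>GL d. mat_apply d M e = e}) * (\<Sum>w\<in>vspace d - {\<lambda>_. 0}. H w)"
proof -
  let ?V0 = "vspace d - {\<lambda>_. 0} :: (nat \<Rightarrow> 'f) set"
  have e: "e \<in> vspace d" using assms(2) unfolding e_def by (intro unit_vec_in_vspace) simp
  have fiber: "{M\<in>GL d. Einv d M e = w} = {M\<in>GL d. mat_apply d M w = e}" if "w \<in> vspace d" for w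
    using Einv_eq_iff[OF _ e that] by auto
  have "Einv d M e \<noteq> (\<lambda>_. 0)" if "M \<in> GL d" for M
    using fiber[OF zero_in_vspace] that vspace_linear_zero[OF vspace_linear_mat_apply] unit_vec_nonzero
    unfolding e_def by (metis (mono_tags, lifting) mem_Collect_eq)
  then have img: "(\<lambda>M. Einv d M e) ` GL d \<subseteq> ?V0"
    using Einv_in_vspace[OF _ e] by auto
  have "(\<Sum>M\<in>GL d. H (Einv d M e)) = (\<Sum>w\<in>?V0. \<Sum>M\<in>{M\<in>GL d. Einv d M e = w}. H (Einv d M e))"
    by (rule sum.group[symmetric, OF finite_GL _ img]) (simp add: finite_vspace)
  also have "\<dots> = (\<Sum>w\<in>?V0. of_nat (card {M\<in>GL d. mat_apply d M e = e}) * H w)"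
  proof (rule sum.cong[OF refl])
    fix w assume w: "w \<in> ?V0"
    have "(\<Sum>M\<in>{M\<in>GL d. Einv d M e = w}. H (Einv d M e)) = of_nat (card {M\<in>GL d. Einv d M e = w}) * H w"
      by simp
    also have "\<dots> = of_nat (card {M\<in>GL d. mat_apply d M w = e}) * H w"
      using fiber w by simp
    finally show "(\<Sum>M\<in>{M\<in>GL d. Einv d M e = w}. H (Einv d M e)) = of_nat (card {M\<in>GL d. mat_apply d M e = e}) * H w"
      using card_GL_fiber_eq[OF assms(2), of w] w unfolding e_def by simp
  qed
  finally show ?thesis by (simp add: sum_distrib_left)
qed

section \<open>Lines\<close>

lemma card_UNIV_field_ge_2: "card (UNIV :: 'f::{finite,field} set) \<ge> 2"
proof -
  have "card {0::'f, 1} \<le> card (UNIV :: 'f set)" by (rule card_mono) simp_all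
  then show ?thesis by simp
qed

lemma card_nonzero_field: "card (UNIV - {0} :: 'f::{finite,field} set) = card (UNIV :: 'f set) - 1"
  by (simp add: card_Diff_singleton)

lemma card_nonzero_vectors:
  "real (card (vspace d - {\<lambda>_. 0} :: (nat \<Rightarrow> 'f::{finite,field}) set)) = real (card (UNIV :: 'f set)) ^ d - 1"
proof -
  have "card (UNIV :: 'f set) ^ d \<ge> 1" using card_UNIV_field_ge_2[where 'f='f] by simp
  then show ?thesis by (simp add: card_Diff_singleton finite_vspace zero_in_vspace card_vspace of_nat_diff)
qed

lemma line_through_subset_vspace: "u \<in> vspace d \<Longrightarrow> w \<in> vspace d \<Longrightarrow> line_through u w \<subseteq> vspace d"
  by (auto simp: line_through_def vspace_def)

lemma line_through_memI: "(\<lambda>i. u i + t * w i) \<in> line_through u w"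
  by (auto simp: line_through_def)

lemma base_in_line_through: "u \<in> line_through u w"
  using line_through_memI[of u 0 w] by simp

lemma line_through_in_lines:
  "z \<in> vspace d \<Longrightarrow> w \<in> vspace d \<Longrightarrow> w \<noteq> (\<lambda>_. 0) \<Longrightarrow> line_through z w \<in> lines d"
  by (auto simp: lines_def)

lemma line_through_shift:
  assumes "z \<in> line_through u w"
  shows "line_through z w = line_through u w"
proof -
  obtain t0 where z: "z = (\<lambda>i. u i + t0 * w i)" using assms by (auto simp: line_through_def)
  have "(\<lambda>i. z i + t * w i) = (\<lambda>i. u i + (t0 + t) * w i)"
    and "(\<lambda>i. u i + t * w i) = (\<lambda>i. z i + (t - t0) * w i)" for t
    using z by (auto simp: algebra_simps)
  then show ?thesis unfolding line_through_def by blast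
qed

lemma line_through_scale:
  fixes w :: "nat \<Rightarrow> 'f::field"
  assumes "s \<noteq> 0"
  shows "line_through z (\<lambda>i. s * w i) = line_through z w"
proof -
  have "(\<lambda>i. z i + t * (s * w i)) = (\<lambda>i. z i + (t * s) * w i)"
    and "(\<lambda>i. z i + t * w i) = (\<lambda>i. z i + (t / s) * (s * w i))" for t
    using assms by (auto simp: algebra_simps)
  then show ?thesis unfolding line_through_def by blast
qed

lemma lines_through_point:
  assumes "l \<in> lines d" "z \<in> l"
  obtains w where "w \<in> vspace d" "w \<noteq> (\<lambda>_. 0)" "l = line_through z w"
  using assms line_through_shift unfolding lines_def by blast

lemma finite_lines: "finite (lines d :: (nat \<Rightarrow> 'f::{finite,field}) set set)"
proof (rule finite_subset)
  show "lines d \<subseteq> Pow (vspace d :: (nat \<Rightarrow> 'f) set)"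
    using line_through_subset_vspace by (auto simp: lines_def)
qed (simp add: finite_vspace)

lemma card_line_through:
  fixes w :: "nat \<Rightarrow> 'f::{finite,field}"
  assumes "w \<noteq> (\<lambda>_. 0)"
  shows "card (line_through u w) = card (UNIV :: 'f set)"
proof -
  obtain k where k: "w k \<noteq> 0" using assms by auto
  have "inj (\<lambda>t. \<lambda>i. u i + t * w i)"
    by (rule injI) (use k in \<open>metis add_left_cancel mult_cancel_right\<close>)
  moreover have "line_through u w = range (\<lambda>t. \<lambda>i. u i + t * w i)"
    by (auto simp: line_through_def)
  ultimately show ?thesis by (simp add: card_image)
qed

lemma card_line: "l \<in> lines d \<Longrightarrow> card l = card (UNIV :: 'f set)"
  for l :: "(nat \<Rightarrow> 'f::{finite,field}) set"
  by (auto simp: lines_def card_line_through)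

lemma card_directions_of_line:
  fixes w :: "nat \<Rightarrow> 'f::{finite,field}"
  assumes "w \<in> vspace d" "w \<noteq> (\<lambda>_. 0)"
  shows "card {w'\<in>vspace d - {\<lambda>_. 0}. line_through z w' = line_through z w} = card (UNIV :: 'f set) - 1"
proof -
  have "{w'\<in>vspace d - {\<lambda>_. 0}. line_through z w' = line_through z w} = (\<lambda>s. \<lambda>i. s * w i) ` (UNIV - {0})"
  proof (intro subset_antisym subsetI)
    fix w' assume w': "w' \<in> {w'\<in>vspace d - {\<lambda>_. 0}. line_through z w' = line_through z w}"
    then have "(\<lambda>i. z i + 1 * w' i) \<in> line_through z w" using line_through_memI[of z 1 w'] by auto
    then obtain t where "(\<lambda>i. z i + 1 * w' i) = (\<lambda>i. z i + t * w i)" by (auto simp: line_through_def)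
    then have "w' = (\<lambda>i. t * w i)" by (simp add: fun_eq_iff)
    with w' show "w' \<in> (\<lambda>s. \<lambda>i. s * w i) ` (UNIV - {0})" by auto
  next
    fix x assume "x \<in> (\<lambda>s. \<lambda>i. s * w i) ` (UNIV - {0})"
    then obtain s where s: "s \<noteq> 0" "x = (\<lambda>i. s * w i)" by blast
    then have "x \<in> vspace d - {\<lambda>_. 0}" using assms by (auto simp: vspace_def fun_eq_iff)
    moreover have "line_through z x = line_through z w" using line_through_scale[OF s(1)] s(2) by simp
    ultimately show "x \<in> {w'\<in>vspace d - {\<lambda>_. 0}. line_through z w' = line_through z w}" by simp
  qed
  moreover obtain k where k: "w k \<noteq> 0" using assms(2) by auto
  then have "inj (\<lambda>s. \<lambda>i. s * w i)"
    by (intro injI) (metis mult_cancel_right)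
  ultimately show ?thesis
    by (simp add: card_image inj_on_subset[of _ UNIV] card_nonzero_field)
qed

lemma sum_nonzero_directions:
  fixes h :: "(nat \<Rightarrow> 'f::{finite,field}) set \<Rightarrow> 'a::comm_ring_1"
  assumes z: "z \<in> vspace d"
  shows "(\<Sum>w\<in>vspace d - {\<lambda>_. 0}. h (line_through z w))
       = (of_nat (card (UNIV :: 'f set)) - 1) * (\<Sum>l\<in>{l\<in>lines d. z \<in> l}. h l)"
proof -
  let ?V0 = "vspace d - {\<lambda>_. 0} :: (nat \<Rightarrow> 'f) set"
  have img: "line_through z ` ?V0 = {l\<in>lines d. z \<in> l}"
  proof (intro subset_antisym subsetI)
    fix l assume "l \<in> {l\<in>lines d. z \<in> l}"
    then obtain w where "w \<in> vspace d" "w \<noteq> (\<lambda>_. 0)" "l = line_through z w"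
      using lines_through_point by blast
    then show "l \<in> line_through z ` ?V0" by blast
  qed (use line_through_in_lines[OF z] base_in_line_through in auto)
  have "(\<Sum>w\<in>?V0. h (line_through z w))
      = (\<Sum>l\<in>line_through z ` ?V0. \<Sum>w\<in>{w\<in>?V0. line_through z w = l}. h (line_through z w))"
    by (rule sum.image_gen) (simp add: finite_vspace)
  also have "\<dots> = (\<Sum>l\<in>line_through z ` ?V0. (of_nat (card (UNIV :: 'f set)) - 1) * h l)"
  proof (rule sum.cong[OF refl])
    fix l assume "l \<in> line_through z ` ?V0"
    then obtain w where w: "w \<in> ?V0" "l = line_through z w" by blast
    have "card {w'\<in>?V0. line_through z w' = l} = card (UNIV :: 'f set) - 1"
      using card_directions_of_line[of w d z] w by simp
    then show "(\<Sum>w\<in>{w\<in>?V0. line_through z w = l}. h (line_through z w))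
        = (of_nat (card (UNIV :: 'f set)) - 1) * h l"
      using card_UNIV_field_ge_2[where 'f='f] by (simp add: of_nat_diff)
  qed
  finally show ?thesis using img by (simp add: sum_distrib_left)
qed

lemma card_lines_through_point:
  fixes z :: "nat \<Rightarrow> 'f::{finite,field}"
  assumes "z \<in> vspace d"
  shows "(real (card (UNIV :: 'f set)) - 1) * real (card {l\<in>lines d. z \<in> l})
       = real (card (UNIV :: 'f set)) ^ d - 1"
  using sum_nonzero_directions[OF assms, of "\<lambda>_. 1 :: real"] card_nonzero_vectors[where 'f='f and d=d]
  by simp

section \<open>The acceptance probability as an autocorrelation\<close>

definition line_amp ::
    "((nat \<Rightarrow> 'f) \<Rightarrow> 'f \<Rightarrow> complex) \<Rightarrow> ((nat \<Rightarrow> 'f) set \<Rightarrow> (nat \<Rightarrow> 'f) \<Rightarrow> 'f) \<Rightarrow> (nat \<Rightarrow> 'f::field) \<Rightarrow> (nat \<Rightarrow> 'f) \<Rightarrow> complex"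
  where "line_amp \<phi> g z w = \<phi> z (g (line_through z w) z)"

lemma amp_norm_sq: "(amp_norm \<phi> z)\<^sup>2 = (\<Sum>y\<in>UNIV. (cmod (\<phi> z y))\<^sup>2)"
  unfolding amp_norm_def by (simp add: sum_nonneg)

lemma cmod_line_amp_le_amp_norm: "(cmod (line_amp \<phi> g z w))\<^sup>2 \<le> (amp_norm \<phi> z)\<^sup>2"
  unfolding amp_norm_sq line_amp_def by (rule member_le_sum) simp_all

lemma cmod_sq_eq_Re_mult_cnj: "(cmod S)\<^sup>2 = Re (S * cnj S)"
  using complex_norm_square[of S] by (metis Re_complex_of_real)

lemma bij_betw_bt:
  assumes "d \<ge> 1"
  shows "bij_betw (\<lambda>(b, s). bt d b s) (vspace (d - 1) \<times> (UNIV::'f::zero set)) (vspace d)"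
  by (rule bij_betw_byWitness[where f'="\<lambda>y. (y(d - 1 := 0), y (d - 1))"])
    (use assms in \<open>auto simp: vspace_def bt_def fun_eq_iff\<close>)

context
  fixes M :: "nat \<Rightarrow> nat \<Rightarrow> 'f::{finite,field}" and d :: nat and b :: "nat \<Rightarrow> 'f"
  assumes d: "d \<ge> 1" and M: "M \<in> GL d" and b: "b \<in> vspace (d - 1)"
begin

lemma bt_in_vspace: "bt d b s \<in> vspace d"
  using d b by (auto simp: bt_def vspace_def)

lemma Einv_bt:
  "Einv d M (bt d b s) = (\<lambda>i. line_u d M b i + s * Einv d M (unit_vec (d - 1)) i)"
proof -
  have "bt d b s = (\<lambda>i. bt d b 0 i + s * unit_vec (d - 1) i)"
    using b by (auto simp: bt_def unit_vec_def vspace_def fun_eq_iff)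
  moreover have "unit_vec (d - 1) \<in> vspace d" using d by (intro unit_vec_in_vspace) simp
  ultimately show ?thesis
    using vspace_linearD[OF vspace_linear_Einv[OF M] bt_in_vspace] by (simp add: line_u_def)
qed

lemma measured_line_eq:
  "measured_line d M b = line_through (line_u d M b) (Einv d M (unit_vec (d - 1)))"
  using Einv_bt[of 1] by (simp add: measured_line_def line_v_def)

lemma meas_prob_pos:
  assumes pos: "\<forall>z\<in>vspace d. amp_norm \<phi> z > 0"
  shows "meas_prob d \<phi> M b > 0"
proof -
  have "amp_norm \<phi> (Einv d M (bt d b 0)) > 0"
    using pos Einv_in_vspace[OF M bt_in_vspace] by blast
  then have "0 < (amp_norm \<phi> (Einv d M (bt d b 0)))\<^sup>2" by simp
  also have "\<dots> \<le> meas_prob d \<phi> M b"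
    unfolding meas_prob_def amp_norm_sq
    by (rule member_le_sum[where f="\<lambda>s. \<Sum>y\<in>UNIV. (cmod (\<phi> (Einv d M (bt d b s)) y))\<^sup>2"])
      (simp_all add: sum_nonneg)
  finally show ?thesis .
qed

text \<open>Only the coordinate \<open>y = g l (z t)\<close> of \<open>|e\<^sub>1\<rangle>\<close> is nonzero, so the overlap picks out one
  amplitude of the collapsed state for each \<open>t\<close>.\<close>

lemma e1_overlap:
  "(\<Sum>y\<in>UNIV. cnj (e1 d g M b t y) * collapsed d \<phi> M b t y)
     = complex_of_real (1 / sqrt (real (card (UNIV :: 'f set))))
       * (line_amp \<phi> g (Einv d M (bt d b t)) (Einv d M (unit_vec (d - 1)))
          / complex_of_real (sqrt (meas_prob d \<phi> M b)))"
proof -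
  let ?w = "Einv d M (unit_vec (d - 1))" and ?z = "Einv d M (bt d b t)"
  have "line_through (line_u d M b) ?w = line_through ?z ?w"
    using line_through_shift[of ?z "line_u d M b" ?w] Einv_bt line_through_memI by metis
  then have G: "g (measured_line d M b) (\<lambda>i. line_u d M b i + (line_v d M b i - line_u d M b i) * t)
      = g (line_through ?z ?w) ?z"
    using measured_line_eq Einv_bt[of 1] Einv_bt[of t] by (simp add: line_v_def mult.commute)
  have "(\<Sum>y\<in>UNIV. cnj (e1 d g M b t y) * collapsed d \<phi> M b t y)
      = (\<Sum>y\<in>UNIV. if y = g (line_through ?z ?w) ?z
          then complex_of_real (1 / sqrt (real (card (UNIV :: 'f set)))) * collapsed d \<phi> M b t y else 0)"
    by (rule sum.cong) (auto simp: e1_def G)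
  then show ?thesis by (simp add: collapsed_def line_amp_def)
qed

lemma meas_prob_mult_accept_prob:
  assumes pos: "\<forall>z\<in>vspace d. amp_norm \<phi> z > 0"
  shows "meas_prob d \<phi> M b * accept_prob d \<phi> g M b
       = (cmod (\<Sum>t\<in>UNIV. line_amp \<phi> g (Einv d M (bt d b t)) (Einv d M (unit_vec (d - 1)))))\<^sup>2
         / real (card (UNIV :: 'f set))"
proof -
  let ?S = "\<Sum>t\<in>UNIV. line_amp \<phi> g (Einv d M (bt d b t)) (Einv d M (unit_vec (d - 1)))"
  let ?p = "meas_prob d \<phi> M b" and ?q = "real (card (UNIV :: 'f set))"
  have "accept_prob d \<phi> g M b
      = (cmod (complex_of_real (1 / sqrt ?q) * ?S / complex_of_real (sqrt ?p)))\<^sup>2"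
    by (simp add: accept_prob_def e1_overlap sum_distrib_left sum_divide_distrib)
  also have "\<dots> = (cmod ?S)\<^sup>2 / (?q * ?p)"
    using meas_prob_pos[OF pos] card_UNIV_field_ge_2[where 'f='f]
    by (simp add: norm_mult norm_divide power_divide power_mult_distrib real_sqrt_mult[symmetric])
  finally show ?thesis using meas_prob_pos[OF pos] by simp
qed

lemma sum_along_line_mult_cnj:
  fixes Y :: "(nat \<Rightarrow> 'f) \<Rightarrow> complex"
  defines "w \<equiv> Einv d M (unit_vec (d - 1))"
  shows "(\<Sum>t\<in>UNIV. Y (Einv d M (bt d b t))) * cnj (\<Sum>t\<in>UNIV. Y (Einv d M (bt d b t)))
       = (\<Sum>t\<in>UNIV. \<Sum>s\<in>UNIV. Y (Einv d M (bt d b t)) * cnj (Y (\<lambda>i. Einv d M (bt d b t) i + s * w i)))"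
proof -
  have shift: "Einv d M (bt d b (t + s)) = (\<lambda>i. Einv d M (bt d b t) i + s * w i)" for t s
    unfolding w_def Einv_bt by (simp add: algebra_simps)
  have translate: "(\<Sum>t'\<in>UNIV. cnj (Y (Einv d M (bt d b t'))))
      = (\<Sum>s\<in>UNIV. cnj (Y (\<lambda>i. Einv d M (bt d b t) i + s * w i)))" for t
    unfolding shift[symmetric]
    by (rule sum.reindex_bij_witness[of _ "\<lambda>s. t + s" "\<lambda>t'. t' - t"]) auto
  have "(\<Sum>t\<in>UNIV. Y (Einv d M (bt d b t))) * cnj (\<Sum>t\<in>UNIV. Y (Einv d M (bt d b t)))
      = (\<Sum>t\<in>UNIV. Y (Einv d M (bt d b t)) * (\<Sum>t'\<in>UNIV. cnj (Y (Einv d M (bt d b t')))))"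
    by (simp only: cnj_sum sum_distrib_right)
  also have "\<dots> = (\<Sum>t\<in>UNIV. Y (Einv d M (bt d b t)) * (\<Sum>s\<in>UNIV. cnj (Y (\<lambda>i. Einv d M (bt d b t) i + s * w i))))"
    by (rule sum.cong[OF refl]) (metis translate)
  finally show ?thesis
    by (simp only: sum_distrib_left)
qed

end

definition diag_corr :: "((nat \<Rightarrow> 'f) \<Rightarrow> 'f \<Rightarrow> complex) \<Rightarrow> ((nat \<Rightarrow> 'f) set \<Rightarrow> (nat \<Rightarrow> 'f) \<Rightarrow> 'f)
    \<Rightarrow> nat \<Rightarrow> (nat \<Rightarrow> 'f::{finite,field}) \<Rightarrow> real"
  where "diag_corr \<phi> g d w = (\<Sum>z\<in>vspace d. (cmod (line_amp \<phi> g z w))\<^sup>2)"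

definition offdiag_corr :: "((nat \<Rightarrow> 'f) \<Rightarrow> 'f \<Rightarrow> complex) \<Rightarrow> ((nat \<Rightarrow> 'f) set \<Rightarrow> (nat \<Rightarrow> 'f) \<Rightarrow> 'f)
    \<Rightarrow> nat \<Rightarrow> (nat \<Rightarrow> 'f::{finite,field}) \<Rightarrow> complex"
  where "offdiag_corr \<phi> g d w =
    (\<Sum>z\<in>vspace d. \<Sum>s\<in>UNIV - {0}. line_amp \<phi> g z w * cnj (line_amp \<phi> g (\<lambda>i. z i + s * w i) w))"

lemma autocorrelation_split:
  "Re (\<Sum>z\<in>vspace d. \<Sum>s\<in>UNIV. line_amp \<phi> g z w * cnj (line_amp \<phi> g (\<lambda>i. z i + s * w i) w))
     = diag_corr \<phi> g d w + Re (offdiag_corr \<phi> g d w)"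
  by (simp add: sum.remove[of UNIV 0] sum.distrib diag_corr_def offdiag_corr_def cmod_sq_eq_Re_mult_cnj)

lemma diag_corr_le_1:
  assumes "(\<Sum>z\<in>vspace d. \<Sum>y\<in>UNIV. (cmod (\<phi> z y))\<^sup>2) = 1"
  shows "diag_corr \<phi> g d w \<le> 1"
proof -
  have "diag_corr \<phi> g d w \<le> (\<Sum>z\<in>vspace d. (amp_norm \<phi> z)\<^sup>2)"
    unfolding diag_corr_def by (rule sum_mono) (rule cmod_line_amp_le_amp_norm)
  then show ?thesis using assms by (simp add: amp_norm_sq)
qed

text \<open>Parametrizing \<open>F\<^sup>d\<close> by the pairs \<open>(b, t)\<close> turns the sum over outcomes of the squared sums
  along the measured lines into a single autocorrelation over \<open>F\<^sup>d\<close>.\<close>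

lemma sum_meas_prob_mult_accept_prob:
  fixes \<phi> :: "(nat \<Rightarrow> 'f::{finite,field}) \<Rightarrow> 'f \<Rightarrow> complex" and M :: "nat \<Rightarrow> nat \<Rightarrow> 'f" and d :: nat
  defines "w \<equiv> Einv d M (unit_vec (d - 1))"
  assumes d: "d \<ge> 1" and M: "M \<in> GL d" and pos: "\<forall>z\<in>vspace d. amp_norm \<phi> z > 0"
  shows "(\<Sum>b\<in>vspace (d - 1). meas_prob d \<phi> M b * accept_prob d \<phi> g M b)
     = (diag_corr \<phi> g d w + Re (offdiag_corr \<phi> g d w)) / real (card (UNIV :: 'f set))"
proof -
  let ?F = "\<lambda>z. \<Sum>s\<in>UNIV. line_amp \<phi> g z w * cnj (line_amp \<phi> g (\<lambda>i. z i + s * w i) w)"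
  have bij: "bij_betw (\<lambda>(b, t). Einv d M (bt d b t)) (vspace (d - 1) \<times> UNIV) (vspace d)"
    using bij_betw_trans[OF bij_betw_bt[OF d] bij_Einv[OF M]] by (simp add: comp_def case_prod_beta')
  have "(cmod (\<Sum>t\<in>UNIV. line_amp \<phi> g (Einv d M (bt d b t)) w))\<^sup>2
      = Re (\<Sum>t\<in>UNIV. ?F (Einv d M (bt d b t)))" if "b \<in> vspace (d - 1)" for b
    unfolding cmod_sq_eq_Re_mult_cnj w_def
    by (simp only: sum_along_line_mult_cnj[OF d M that, where Y="\<lambda>z. line_amp \<phi> g z (Einv d M (unit_vec (d - 1)))"])
  then have "(\<Sum>b\<in>vspace (d - 1). (cmod (\<Sum>t\<in>UNIV. line_amp \<phi> g (Einv d M (bt d b t)) w))\<^sup>2)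
      = Re (\<Sum>b\<in>vspace (d - 1). \<Sum>t\<in>UNIV. ?F (Einv d M (bt d b t)))"
    by (simp only: Re_sum cong: sum.cong)
  also have "(\<Sum>b\<in>vspace (d - 1). \<Sum>t\<in>UNIV. ?F (Einv d M (bt d b t)))
      = (\<Sum>(b, t)\<in>vspace (d - 1) \<times> UNIV. ?F (Einv d M (bt d b t)))"
    by (rule sum.cartesian_product)
  also have "\<dots> = (\<Sum>z\<in>vspace d. ?F z)"
    using sum.reindex_bij_betw[OF bij, of ?F] by (simp add: case_prod_beta')
  also have "Re (\<Sum>z\<in>vspace d. ?F z) = diag_corr \<phi> g d w + Re (offdiag_corr \<phi> g d w)"
    by (rule autocorrelation_split)
  finally show ?thesis
    using meas_prob_mult_accept_prob[OF d M _ pos] unfolding w_def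
    by (simp add: sum_divide_distrib[symmetric])
qed

lemma GL_nonempty: "GL d \<noteq> ({} :: (nat \<Rightarrow> nat \<Rightarrow> 'f::field) set)"
  using matrix_of_in_GL[of d id] by (auto simp: vspace_linear_def)

lemma card_GL_eq:
  assumes "d \<ge> 1"
  shows "real (card (GL d :: (nat \<Rightarrow> nat \<Rightarrow> 'f::{finite,field}) set))
       = real (card {M\<in>GL d. mat_apply d M (unit_vec (d - 1)) = (unit_vec (d - 1) :: nat \<Rightarrow> 'f)})
         * (real (card (UNIV :: 'f set)) ^ d - 1)"
proof -
  have "real (card (GL d :: (nat \<Rightarrow> nat \<Rightarrow> 'f) set))
      = real (card {M\<in>GL d. mat_apply d M (unit_vec (d - 1)) = (unit_vec (d - 1) :: nat \<Rightarrow> 'f)})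
        * real (card (vspace d - {\<lambda>_. 0} :: (nat \<Rightarrow> 'f) set))"
    using sum_GL_Einv_unit_vec[OF assms, of "\<lambda>_. 1 :: real"] by simp
  then show ?thesis by (simp only: card_nonzero_vectors)
qed

lemma V_QLDT_le:
  fixes \<phi> :: "(nat \<Rightarrow> 'f::{finite,field}) \<Rightarrow> 'f \<Rightarrow> complex"
  assumes d: "d \<ge> 1"
    and norm: "(\<Sum>z\<in>vspace d. \<Sum>y\<in>UNIV. (cmod (\<phi> z y))\<^sup>2) = 1"
    and pos: "\<forall>z\<in>vspace d. amp_norm \<phi> z > 0"
  shows "real (card (UNIV :: 'f set)) * V_QLDT d \<phi> g - 1
     \<le> cmod (\<Sum>w\<in>vspace d - {\<lambda>_. 0}. offdiag_corr \<phi> g d w) / (real (card (UNIV :: 'f set)) ^ d - 1)"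
proof -
  let ?q = "real (card (UNIV :: 'f set))"
  let ?G = "GL d :: (nat \<Rightarrow> nat \<Rightarrow> 'f) set"
  let ?e = "unit_vec (d - 1) :: nat \<Rightarrow> 'f"
  let ?n = "real (card {M\<in>?G. mat_apply d M ?e = ?e})"
  let ?C = "cmod (\<Sum>w\<in>vspace d - {\<lambda>_. 0}. offdiag_corr \<phi> g d w)"
  have "(\<Sum>M\<in>?G. \<Sum>b\<in>vspace (d - 1). meas_prob d \<phi> M b * accept_prob d \<phi> g M b)
      = (\<Sum>M\<in>?G. (diag_corr \<phi> g d (Einv d M ?e) + Re (offdiag_corr \<phi> g d (Einv d M ?e))) / ?q)"
    by (rule sum.cong[OF refl]) (rule sum_meas_prob_mult_accept_prob[OF d _ pos])
  then have "?q * V_QLDT d \<phi> g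
      = ((\<Sum>M\<in>?G. diag_corr \<phi> g d (Einv d M ?e)) + (\<Sum>M\<in>?G. Re (offdiag_corr \<phi> g d (Einv d M ?e))))
        / real (card ?G)"
    using card_UNIV_field_ge_2[where 'f='f]
    by (simp add: V_QLDT_def sum.distrib sum_divide_distrib[symmetric])
  moreover have "(\<Sum>M\<in>?G. diag_corr \<phi> g d (Einv d M ?e)) \<le> real (card ?G)"
    using sum_mono[of ?G "\<lambda>M. diag_corr \<phi> g d (Einv d M ?e)" "\<lambda>_. 1"] diag_corr_le_1[OF norm] by simp
  moreover have "(\<Sum>M\<in>?G. Re (offdiag_corr \<phi> g d (Einv d M ?e))) \<le> ?n * ?C"
    using sum_GL_Einv_unit_vec[OF d, of "\<lambda>w. Re (offdiag_corr \<phi> g d w)"]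
    by (simp add: complex_Re_le_cmod mult_left_mono flip: Re_sum)
  moreover have "real (card ?G) = ?n * (?q ^ d - 1)"
    using card_GL_eq[OF d] .
  moreover have "real (card ?G) > 0"
    using GL_nonempty[where 'f='f] finite_GL[where 'f='f] by (simp add: card_gt_0_iff)
  ultimately have "?q * V_QLDT d \<phi> g \<le> (?n * (?q ^ d - 1) + ?n * ?C) / (?n * (?q ^ d - 1))"
    by (simp add: divide_right_mono add_mono)
  also have "\<dots> = 1 + ?C / (?q ^ d - 1)"
  proof -
    have "?n * (?q ^ d - 1) > 0"
      using \<open>real (card ?G) > 0\<close> \<open>real (card ?G) = ?n * (?q ^ d - 1)\<close> by simp
    then have "?n > 0" "?q ^ d - 1 > 0" by (simp_all add: zero_less_mult_iff)
    then show ?thesis by (simp add: add_divide_distrib)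
  qed
  finally show ?thesis by simp
qed

section \<open>Cauchy--Schwarz bound on the off-diagonal terms\<close>

definition line_weight ::
    "((nat \<Rightarrow> 'f::{finite,field}) \<Rightarrow> 'f \<Rightarrow> complex) \<Rightarrow> ((nat \<Rightarrow> 'f) set \<Rightarrow> (nat \<Rightarrow> 'f) \<Rightarrow> 'f) \<Rightarrow> nat \<Rightarrow> real"
  where "line_weight \<phi> g d =
    (\<Sum>z\<in>vspace d. \<Sum>l\<in>{l\<in>lines d. z \<in> l}. (cmod (\<phi> z (g l z)))\<^sup>2 / (amp_norm \<phi> z)\<^sup>2)"

definition line_amp_ratio ::
    "((nat \<Rightarrow> 'f) \<Rightarrow> 'f \<Rightarrow> complex) \<Rightarrow> ((nat \<Rightarrow> 'f) set \<Rightarrow> (nat \<Rightarrow> 'f) \<Rightarrow> 'f) \<Rightarrow> (nat \<Rightarrow> 'f::{finite,field}) \<Rightarrow> (nat \<Rightarrow> 'f) \<Rightarrow> real"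
  where "line_amp_ratio \<phi> g z w = cmod (line_amp \<phi> g z w) / amp_norm \<phi> z"

lemma line_amp_ratio_nonneg: "line_amp_ratio \<phi> g z w \<ge> 0"
  by (simp add: line_amp_ratio_def amp_norm_def sum_nonneg)

lemma line_amp_ratio_le_1: "amp_norm \<phi> z > 0 \<Longrightarrow> line_amp_ratio \<phi> g z w \<le> 1"
  using cmod_line_amp_le_amp_norm[of \<phi> g z w]
  by (simp add: line_amp_ratio_def power2_le_iff_abs_le)

lemma sum_line_amp_ratio_sq:
  fixes \<phi> :: "(nat \<Rightarrow> 'f::{finite,field}) \<Rightarrow> 'f \<Rightarrow> complex"
  assumes "z \<in> vspace d"
  shows "(\<Sum>w\<in>vspace d - {\<lambda>_. 0}. (line_amp_ratio \<phi> g z w)\<^sup>2)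
       = (real (card (UNIV :: 'f set)) - 1)
         * (\<Sum>l\<in>{l\<in>lines d. z \<in> l}. (cmod (\<phi> z (g l z)))\<^sup>2 / (amp_norm \<phi> z)\<^sup>2)"
  using sum_nonzero_directions[OF assms, of "\<lambda>l. (cmod (\<phi> z (g l z)))\<^sup>2 / (amp_norm \<phi> z)\<^sup>2"]
  by (simp add: line_amp_ratio_def line_amp_def power_divide)

lemma sum_nonzero_translate_le:
  fixes h :: "(nat \<Rightarrow> 'f::{finite,field}) \<Rightarrow> real"
  assumes "z \<in> vspace d" "s \<noteq> 0" "\<And>x. h x \<ge> 0"
  shows "(\<Sum>w\<in>vspace d - {\<lambda>_. 0}. h (\<lambda>i. z i + s * w i)) \<le> (\<Sum>x\<in>vspace d. h x)"
proof -
  let ?m = "\<lambda>w. \<lambda>i. z i + s * w i"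
  have "inj_on ?m (vspace d - {\<lambda>_. 0})"
    using assms(2) by (intro inj_onI) (simp add: fun_eq_iff)
  then have "(\<Sum>w\<in>vspace d - {\<lambda>_. 0}. h (?m w)) = (\<Sum>x\<in>?m ` (vspace d - {\<lambda>_. 0}). h x)"
    by (simp add: sum.reindex)
  also have "\<dots> \<le> (\<Sum>x\<in>vspace d. h x)"
    using assms(1,3) by (intro sum_mono2[OF finite_vspace]) (auto simp: vspace_def)
  finally show ?thesis .
qed

lemma sum3_eq_sum_product:
  "(\<Sum>w\<in>A. \<Sum>z\<in>B. \<Sum>s\<in>C. f w z s) = (\<Sum>p\<in>A \<times> (B \<times> C). f (fst p) (fst (snd p)) (snd (snd p)))"
  by (simp add: sum.cartesian_product case_prod_beta')

context
  fixes \<phi> :: "(nat \<Rightarrow> 'f::{finite,field}) \<Rightarrow> 'f \<Rightarrow> complex"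
    and g :: "(nat \<Rightarrow> 'f) set \<Rightarrow> (nat \<Rightarrow> 'f) \<Rightarrow> 'f" and d :: nat
  assumes norm: "(\<Sum>z\<in>vspace d. \<Sum>y\<in>UNIV. (cmod (\<phi> z y))\<^sup>2) = 1"
    and pos: "\<forall>z\<in>vspace d. amp_norm \<phi> z > 0"
begin

text \<open>Cauchy--Schwarz separates the products of amplitude norms, controlled by the
  normalisation of \<open>\<Phi>\<close>, from the products of ratios, controlled by \<open>line_weight\<close>.\<close>

lemma cmod_sum_offdiag_corr_le:
  "cmod (\<Sum>w\<in>vspace d - {\<lambda>_. 0}. offdiag_corr \<phi> g d w)
     \<le> (\<Sum>w\<in>vspace d - {\<lambda>_. 0}. \<Sum>z\<in>vspace d. \<Sum>s\<in>UNIV - {0}.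
          (amp_norm \<phi> z * amp_norm \<phi> (\<lambda>i. z i + s * w i))
          * (line_amp_ratio \<phi> g z w * line_amp_ratio \<phi> g (\<lambda>i. z i + s * w i) w))"
proof -
  have "cmod (line_amp \<phi> g z w * cnj (line_amp \<phi> g (\<lambda>i. z i + s * w i) w))
      = (amp_norm \<phi> z * amp_norm \<phi> (\<lambda>i. z i + s * w i))
        * (line_amp_ratio \<phi> g z w * line_amp_ratio \<phi> g (\<lambda>i. z i + s * w i) w)"
    if "z \<in> vspace d" "w \<in> vspace d" for z w s
  proof -
    have "(\<lambda>i. z i + s * w i) \<in> vspace d" using that by (simp add: vspace_def)
    then have "amp_norm \<phi> z > 0" "amp_norm \<phi> (\<lambda>i. z i + s * w i) > 0" using pos that by auto
    then show ?thesis by (simp add: line_amp_ratio_def norm_mult)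
  qed
  then show ?thesis
    unfolding offdiag_corr_def
    by (auto intro!: order_trans[OF norm_sum] sum_mono)
qed

lemma sum_amp_norm_product_sq_le:
  "(\<Sum>w\<in>vspace d - {\<lambda>_. 0}. \<Sum>z\<in>vspace d. \<Sum>s\<in>UNIV - {0}.
      (amp_norm \<phi> z * amp_norm \<phi> (\<lambda>i. z i + s * w i))\<^sup>2) \<le> real (card (UNIV :: 'f set)) - 1"
proof -
  have tr: "(\<Sum>w\<in>vspace d - {\<lambda>_. 0}. (amp_norm \<phi> (\<lambda>i. z i + s * w i))\<^sup>2) \<le> 1"
    if "z \<in> vspace d" "s \<noteq> 0" for z and s :: 'f
    using sum_nonzero_translate_le[OF that, of "\<lambda>x. (amp_norm \<phi> x)\<^sup>2"] norm
    by (simp add: amp_norm_sq sum_nonneg)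
  have "(\<Sum>w\<in>vspace d - {\<lambda>_. 0}. \<Sum>z\<in>vspace d. \<Sum>s\<in>UNIV - {0}.
      (amp_norm \<phi> z * amp_norm \<phi> (\<lambda>i. z i + s * w i))\<^sup>2)
      = (\<Sum>z\<in>vspace d. (amp_norm \<phi> z)\<^sup>2
           * (\<Sum>s\<in>UNIV - {0}. \<Sum>w\<in>vspace d - {\<lambda>_. 0}. (amp_norm \<phi> (\<lambda>i. z i + s * w i))\<^sup>2))"
    by (simp add: sum.swap[of _ "vspace d - {\<lambda>_. 0}"] sum_distrib_left power_mult_distrib)
  also have "\<dots> \<le> (\<Sum>z\<in>vspace d. (amp_norm \<phi> z)\<^sup>2 * (\<Sum>s\<in>UNIV - {0::'f}. 1))"
    using tr by (intro sum_mono mult_left_mono) auto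
  also have "\<dots> = real (card (UNIV :: 'f set)) - 1"
    using norm card_UNIV_field_ge_2[where 'f='f]
    by (simp add: amp_norm_sq card_nonzero_field of_nat_diff flip: sum_distrib_right)
  finally show ?thesis .
qed

lemma sum_line_amp_ratio_product_sq_le:
  "(\<Sum>w\<in>vspace d - {\<lambda>_. 0}. \<Sum>z\<in>vspace d. \<Sum>s\<in>UNIV - {0}.
      (line_amp_ratio \<phi> g z w * line_amp_ratio \<phi> g (\<lambda>i. z i + s * w i) w)\<^sup>2)
     \<le> (real (card (UNIV :: 'f set)) - 1)\<^sup>2 * line_weight \<phi> g d"
proof -
  let ?r = "line_amp_ratio \<phi> g"
  have "(?r z w * ?r (\<lambda>i. z i + s * w i) w)\<^sup>2 \<le> (?r z w)\<^sup>2"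
    if "z \<in> vspace d" "w \<in> vspace d" for z w s
  proof -
    have "(\<lambda>i. z i + s * w i) \<in> vspace d" using that by (simp add: vspace_def)
    then have "?r (\<lambda>i. z i + s * w i) w \<le> 1" using pos line_amp_ratio_le_1 by blast
    then have "(?r (\<lambda>i. z i + s * w i) w)\<^sup>2 \<le> 1"
      by (rule power_le_one[OF line_amp_ratio_nonneg])
    then show ?thesis by (simp add: power_mult_distrib mult_left_le)
  qed
  then have "(\<Sum>w\<in>vspace d - {\<lambda>_. 0}. \<Sum>z\<in>vspace d. \<Sum>s\<in>UNIV - {0}. (?r z w * ?r (\<lambda>i. z i + s * w i) w)\<^sup>2)
      \<le> (\<Sum>w\<in>vspace d - {\<lambda>_. 0}. \<Sum>z\<in>vspace d. \<Sum>s\<in>UNIV - {0::'f}. (?r z w)\<^sup>2)"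
    by (intro sum_mono) auto
  also have "\<dots> = (real (card (UNIV :: 'f set)) - 1) * (\<Sum>z\<in>vspace d. \<Sum>w\<in>vspace d - {\<lambda>_. 0}. (?r z w)\<^sup>2)"
    using card_UNIV_field_ge_2[where 'f='f]
    by (simp add: card_nonzero_field of_nat_diff sum_distrib_left sum.swap[of _ "vspace d - {\<lambda>_. 0}"])
  also have "(\<Sum>z\<in>vspace d. \<Sum>w\<in>vspace d - {\<lambda>_. 0}. (?r z w)\<^sup>2)
      = (\<Sum>z\<in>vspace d. (real (card (UNIV :: 'f set)) - 1)
           * (\<Sum>l\<in>{l\<in>lines d. z \<in> l}. (cmod (\<phi> z (g l z)))\<^sup>2 / (amp_norm \<phi> z)\<^sup>2))"
    by (rule sum.cong[OF refl]) (rule sum_line_amp_ratio_sq)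
  also have "(real (card (UNIV :: 'f set)) - 1) * \<dots> = (real (card (UNIV :: 'f set)) - 1)\<^sup>2 * line_weight \<phi> g d"
    by (simp add: line_weight_def sum_distrib_left power2_eq_square mult.assoc)
  finally show ?thesis .
qed

lemma cmod_sum_offdiag_corr_sq_le:
  "(cmod (\<Sum>w\<in>vspace d - {\<lambda>_. 0}. offdiag_corr \<phi> g d w))\<^sup>2
     \<le> (real (card (UNIV :: 'f set)) - 1) ^ 3 * line_weight \<phi> g d"
proof -
  let ?V0 = "vspace d - {\<lambda>_. 0}" and ?S = "UNIV - {0::'f}"
  let ?\<alpha> = "\<lambda>w z s. amp_norm \<phi> z * amp_norm \<phi> (\<lambda>i. z i + s * w i)"
  let ?\<beta> = "\<lambda>w z s. line_amp_ratio \<phi> g z w * line_amp_ratio \<phi> g (\<lambda>i. z i + s * w i) w"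
  have "(cmod (\<Sum>w\<in>?V0. offdiag_corr \<phi> g d w))\<^sup>2 \<le> (\<Sum>w\<in>?V0. \<Sum>z\<in>vspace d. \<Sum>s\<in>?S. ?\<alpha> w z s * ?\<beta> w z s)\<^sup>2"
    by (rule power_mono[OF cmod_sum_offdiag_corr_le norm_ge_zero])
  also have "\<dots> \<le> (\<Sum>w\<in>?V0. \<Sum>z\<in>vspace d. \<Sum>s\<in>?S. (?\<alpha> w z s)\<^sup>2)
                  * (\<Sum>w\<in>?V0. \<Sum>z\<in>vspace d. \<Sum>s\<in>?S. (?\<beta> w z s)\<^sup>2)"
    unfolding sum3_eq_sum_product by (rule Cauchy_Schwarz_ineq_sum)
  also have "\<dots> \<le> (real (card (UNIV :: 'f set)) - 1) * ((real (card (UNIV :: 'f set)) - 1)\<^sup>2 * line_weight \<phi> g d)"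
    using card_UNIV_field_ge_2[where 'f='f]
    by (intro mult_mono sum_amp_norm_product_sq_le sum_line_amp_ratio_product_sq_le) (simp_all add: sum_nonneg)
  finally show ?thesis by (simp add: power3_eq_cube power2_eq_square mult.assoc)
qed

end

section \<open>From the acceptance probability to an agreeing function\<close>

lemma deviation_sq_le:
  fixes q P \<gamma> C T :: real
  assumes q: "q \<ge> 2" and P: "P \<ge> q\<^sup>2" and \<gamma>: "\<gamma> \<ge> 1 / q"
    and C: "q * \<gamma> - 1 \<le> C / (P - 1)" and CT: "C\<^sup>2 \<le> (q - 1) ^ 3 * T"
  shows "(\<gamma> - 1 / q)\<^sup>2 \<le> 1 / (P * ((P - 1) / (q - 1))) * T"
proof -
  have "q * q \<ge> 2 * 2" using q by (intro mult_mono) auto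
  then have P1: "P - 1 > 0" using P by (simp add: power2_eq_square)
  have T: "T \<ge> 0"
  proof (rule ccontr)
    assume "\<not> T \<ge> 0"
    moreover have "(q - 1) ^ 3 > 0" using q by simp
    ultimately have "(q - 1) ^ 3 * T < 0" by (simp add: mult_pos_neg)
    then show False using CT zero_le_power2[of C] by linarith
  qed
  have x: "0 \<le> q * \<gamma> - 1" using \<gamma> q by (simp add: field_simps)
  have "\<gamma> - 1 / q = (q * \<gamma> - 1) / q" using q by (simp add: field_simps)
  then have "(\<gamma> - 1 / q)\<^sup>2 = (q * \<gamma> - 1)\<^sup>2 / q\<^sup>2" by (simp add: power_divide)
  also have "\<dots> \<le> (C / (P - 1))\<^sup>2 / q\<^sup>2"
    using power_mono[OF C x] by (simp add: divide_right_mono)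
  also have "\<dots> = C\<^sup>2 / ((P - 1)\<^sup>2 * q\<^sup>2)" by (simp add: power_divide)
  also have "\<dots> \<le> (q - 1) ^ 3 * T / ((P - 1)\<^sup>2 * q\<^sup>2)"
    by (rule divide_right_mono[OF CT]) simp
  also have "\<dots> = ((q - 1) * T / (P * (P - 1))) * ((q - 1)\<^sup>2 * P / (q\<^sup>2 * (P - 1)))"
  proof -
    have "a ^ 3 * T / (R\<^sup>2 * q\<^sup>2) = (a * T / (P * R)) * (a\<^sup>2 * P / (q\<^sup>2 * R))"
      if "P \<noteq> 0" "R \<noteq> 0" "q \<noteq> 0" for a R :: real
      using that by (simp add: field_simps power2_eq_square power3_eq_cube)
    then show ?thesis using q P1 by simp
  qed
  also have "\<dots> \<le> (q - 1) * T / (P * (P - 1))"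
  proof (rule mult_left_le)
    have "q\<^sup>2 \<le> P * (2 * q - 1)"
      using P q mult_mono[OF P, of 1 "2 * q - 1"] zero_le_power2[of q] by simp
    then have "(q - 1)\<^sup>2 * P \<le> q\<^sup>2 * (P - 1)" by (simp add: power2_eq_square algebra_simps)
    then show "(q - 1)\<^sup>2 * P / (q\<^sup>2 * (P - 1)) \<le> 1" using q P1 by (simp add: divide_le_eq_1)
    show "0 \<le> (q - 1) * T / (P * (P - 1))" using q T P1 P by simp
  qed
  also have "\<dots> = 1 / (P * ((P - 1) / (q - 1))) * T" using q by (simp add: field_simps)
  finally show ?thesis .
qed
lemma sum_lines_card_eq_sum_points:
  fixes R :: "(nat \<Rightarrow> 'f::{finite,field}) set \<Rightarrow> (nat \<Rightarrow> 'f) \<Rightarrow> bool"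
  shows "(\<Sum>l\<in>lines d. card {z\<in>l. R l z}) = (\<Sum>z\<in>vspace d. card {l\<in>lines d. z \<in> l \<and> R l z})"
proof -
  have "{z\<in>l. R l z} = {z\<in>vspace d. z \<in> l \<and> R l z}" if "l \<in> lines d" for l
    using that line_through_subset_vspace by (auto simp: lines_def)
  then have "(\<Sum>l\<in>lines d. card {z\<in>l. R l z}) = (\<Sum>l\<in>lines d. \<Sum>z\<in>{z\<in>vspace d. z \<in> l \<and> R l z}. 1)"
    by simp
  also have "\<dots> = (\<Sum>z\<in>vspace d. \<Sum>l\<in>{l\<in>lines d. z \<in> l \<and> R l z}. 1)"
    by (rule sum.swap_restrict) (simp_all add: finite_lines finite_vspace)
  finally show ?thesis by simp
qed

lemma card_lines:
  "real (card (lines d :: (nat \<Rightarrow> 'f::{finite,field}) set set)) * real (card (UNIV :: 'f set))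
     = real (card (UNIV :: 'f set)) ^ d
       * ((real (card (UNIV :: 'f set)) ^ d - 1) / (real (card (UNIV :: 'f set)) - 1))"
proof -
  let ?q = "real (card (UNIV :: 'f set))"
  have "(\<Sum>l\<in>(lines d :: (nat \<Rightarrow> 'f) set set). real (card {z\<in>l. True}))
      = (\<Sum>l\<in>(lines d :: (nat \<Rightarrow> 'f) set set). ?q)"
    by (rule sum.cong) (simp_all add: card_line)
  then have "real (card (lines d :: (nat \<Rightarrow> 'f) set set)) * ?q
      = real (\<Sum>l\<in>(lines d :: (nat \<Rightarrow> 'f) set set). card {z\<in>l. True})"
    by simp
  also have "\<dots> = (\<Sum>z\<in>(vspace d :: (nat \<Rightarrow> 'f) set). real (card {l\<in>lines d. z \<in> l}))"
    by (simp only: sum_lines_card_eq_sum_points of_nat_sum) simp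
  also have "\<dots> = (\<Sum>z\<in>(vspace d :: (nat \<Rightarrow> 'f) set). (?q ^ d - 1) / (?q - 1))"
    using card_lines_through_point card_UNIV_field_ge_2[where 'f='f]
    by (intro sum.cong) (simp_all add: eq_divide_eq mult.commute)
  finally show ?thesis by (simp add: card_vspace)
qed

lemma Agr_eq_sum_points:
  fixes f :: "(nat \<Rightarrow> 'f::{finite,field}) \<Rightarrow> 'f"
  shows "Agr d f g = (\<Sum>z\<in>vspace d. real (card {l\<in>lines d. z \<in> l \<and> g l z = f z}))
     / (real (card (UNIV :: 'f set)) ^ d
        * ((real (card (UNIV :: 'f set)) ^ d - 1) / (real (card (UNIV :: 'f::{finite,field} set)) - 1)))"
proof -
  have "Agr d f g = real (\<Sum>l\<in>lines d. card {z\<in>l. f z = g l z})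
      / (real (card (lines d :: (nat \<Rightarrow> 'f) set set)) * real (card (UNIV :: 'f set)))"
    by (simp add: Agr_def Agr_line_def card_line sum_divide_distrib[symmetric] cong: sum.cong)
  also have "real (\<Sum>l\<in>lines d. card {z\<in>l. f z = g l z})
      = (\<Sum>z\<in>vspace d. real (card {l\<in>lines d. z \<in> l \<and> g l z = f z}))"
    by (simp add: sum_lines_card_eq_sum_points eq_commute)
  finally show ?thesis by (simp only: card_lines)
qed

lemma exists_maximizing_fun:
  fixes h :: "'a \<Rightarrow> 'b::finite \<Rightarrow> nat"
  shows "\<exists>f. \<forall>x y. h x y \<le> h x (f x)"
proof -
  have "\<exists>y. \<forall>y'. h x y' \<le> h x y" for x
  proof -
    have "Max (range (h x)) \<in> range (h x)" by (rule Max_in) simp_all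
    moreover have "h x y' \<le> Max (range (h x))" for y' by (rule Max_ge) simp_all
    ultimately show ?thesis by (metis imageE)
  qed
  then show ?thesis by metis
qed

text \<open>Group the lines through \<open>z\<close> by the value \<open>y\<close> they prescribe at \<open>z\<close>: each group
  contributes its size times \<open>|\<phi>\<^sub>z\<^sub>,\<^sub>y|\<^sup>2/\<phi>\<^sub>z\<^sup>2\<close>, and these weights sum to \<open>1\<close>.\<close>

lemma line_weight_le_card_agreeing_lines:
  fixes \<phi> :: "(nat \<Rightarrow> 'f::{finite,field}) \<Rightarrow> 'f \<Rightarrow> complex"
  assumes pos: "\<forall>z\<in>vspace d. amp_norm \<phi> z > 0"
    and f: "\<And>z y. card {l\<in>lines d. z \<in> l \<and> g l z = y} \<le> card {l\<in>lines d. z \<in> l \<and> g l z = f z}"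
  shows "line_weight \<phi> g d \<le> (\<Sum>z\<in>vspace d. real (card {l\<in>lines d. z \<in> l \<and> g l z = f z}))"
  unfolding line_weight_def
proof (rule sum_mono)
  fix z :: "nat \<Rightarrow> 'f" assume "z \<in> vspace d"
  then have "amp_norm \<phi> z > 0" using pos by blast
  then have a: "(amp_norm \<phi> z)\<^sup>2 > 0" by simp
  let ?c = "\<lambda>y. real (card {l\<in>lines d. z \<in> l \<and> g l z = y})"
  have "(\<Sum>l\<in>{l\<in>lines d. z \<in> l}. (cmod (\<phi> z (g l z)))\<^sup>2)
      = (\<Sum>y\<in>UNIV. \<Sum>l\<in>{l\<in>{l\<in>lines d. z \<in> l}. g l z = y}. (cmod (\<phi> z (g l z)))\<^sup>2)"
    by (rule sum.group[symmetric]) (simp_all add: finite_lines)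
  also have "\<dots> = (\<Sum>y\<in>UNIV. ?c y * (cmod (\<phi> z y))\<^sup>2)"
  proof (rule sum.cong[OF refl])
    fix y
    have "{l\<in>{l\<in>lines d. z \<in> l}. g l z = y} = {l\<in>lines d. z \<in> l \<and> g l z = y}" by auto
    then show "(\<Sum>l\<in>{l\<in>{l\<in>lines d. z \<in> l}. g l z = y}. (cmod (\<phi> z (g l z)))\<^sup>2) = ?c y * (cmod (\<phi> z y))\<^sup>2"
      by simp
  qed
  also have "\<dots> \<le> (\<Sum>y\<in>UNIV. ?c (f z) * (cmod (\<phi> z y))\<^sup>2)"
    using f by (intro sum_mono mult_right_mono) simp_all
  also have "\<dots> = ?c (f z) * (amp_norm \<phi> z)\<^sup>2"
    by (simp add: amp_norm_sq sum_distrib_left)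
  finally show "(\<Sum>l\<in>{l\<in>lines d. z \<in> l}. (cmod (\<phi> z (g l z)))\<^sup>2 / (amp_norm \<phi> z)\<^sup>2) \<le> ?c (f z)"
    using a by (simp add: sum_divide_distrib[symmetric] pos_divide_le_eq)
qed

lemma exists_Agr_ge_line_weight:
  fixes \<phi> :: "(nat \<Rightarrow> 'f::{finite,field}) \<Rightarrow> 'f \<Rightarrow> complex"
  assumes d: "d \<ge> 1" and pos: "\<forall>z\<in>vspace d. amp_norm \<phi> z > 0"
  shows "\<exists>f. Agr d f g \<ge> 1 / (real (card (UNIV :: 'f set)) ^ d
           * ((real (card (UNIV :: 'f set)) ^ d - 1) / (real (card (UNIV :: 'f set)) - 1)))
         * line_weight \<phi> g d"
proof -
  let ?q = "real (card (UNIV :: 'f set))"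
  obtain f where f: "\<And>z y. card {l\<in>lines d. z \<in> l \<and> g l z = y} \<le> card {l\<in>lines d. z \<in> l \<and> g l z = f z}"
    using exists_maximizing_fun[of "\<lambda>z y. card {l\<in>lines d. z \<in> l \<and> g l z = y}"] by blast
  have q: "2 \<le> ?q" using card_UNIV_field_ge_2[where 'f='f] by simp
  moreover have "?q \<le> ?q ^ d" using d q power_increasing[of 1 d ?q] by simp
  ultimately have "?q ^ d * ((?q ^ d - 1) / (?q - 1)) > 0"
    by (intro mult_pos_pos divide_pos_pos) linarith+
  then have "0 \<le> 1 / (?q ^ d * ((?q ^ d - 1) / (?q - 1)))"
    by (simp only: zero_le_divide_1_iff less_imp_le)
  then have "1 / (?q ^ d * ((?q ^ d - 1) / (?q - 1))) * line_weight \<phi> g d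
      \<le> 1 / (?q ^ d * ((?q ^ d - 1) / (?q - 1)))
        * (\<Sum>z\<in>vspace d. real (card {l\<in>lines d. z \<in> l \<and> g l z = f z}))"
    by (rule mult_left_mono[OF line_weight_le_card_agreeing_lines[OF pos f]])
  also have "\<dots> = Agr d f g" by (simp add: Agr_eq_sum_points)
  finally show ?thesis by blast
qed

theorem mainTheorem7:
  fixes \<phi> :: "(nat \<Rightarrow> 'f::{finite,field}) \<Rightarrow> 'f \<Rightarrow> complex"
    and g :: "(nat \<Rightarrow> 'f) set \<Rightarrow> (nat \<Rightarrow> 'f) \<Rightarrow> 'f"
    and a d r :: nat
  assumes "card (UNIV :: 'f set) = 2 ^ a"
    and "d \<ge> 2"
    and "low_degree_family d r g"
    and "(\<Sum>z\<in>vspace d. \<Sum>y\<in>UNIV. (cmod (\<phi> z y))\<^sup>2) = 1"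
    and "\<forall>z\<in>vspace d. amp_norm \<phi> z > 0"
    and "V_QLDT d \<phi> g \<ge> 1 / real (card (UNIV :: 'f set))"
  shows "(V_QLDT d \<phi> g - 1 / real (card (UNIV :: 'f set)))\<^sup>2
           \<le> 1 / (real (card (UNIV :: 'f set)) ^ d * ((real (card (UNIV :: 'f set)) ^ d - 1) / (real (card (UNIV :: 'f set)) - 1)))
              * (\<Sum>z\<in>vspace d. \<Sum>l\<in>{l\<in>lines d. z \<in> l}.
                   (cmod (\<phi> z (g l z)))\<^sup>2 / (amp_norm \<phi> z)\<^sup>2)
       \<and> (\<exists>f' :: (nat \<Rightarrow> 'f) \<Rightarrow> 'f. Agr d f' g \<ge> (V_QLDT d \<phi> g - 1 / real (card (UNIV :: 'f set)))\<^sup>2)"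
proof -
  let ?q = "real (card (UNIV :: 'f set))"
  have d: "d \<ge> 1" using \<open>d \<ge> 2\<close> by simp
  have q: "?q \<ge> 2" using card_UNIV_field_ge_2[where 'f='f] by simp
  then have "?q\<^sup>2 \<le> ?q ^ d" using \<open>d \<ge> 2\<close> by (intro power_increasing) simp_all
  then have bound: "(V_QLDT d \<phi> g - 1 / ?q)\<^sup>2 \<le> 1 / (?q ^ d * ((?q ^ d - 1) / (?q - 1))) * line_weight \<phi> g d"
    using deviation_sq_le[OF q _ assms(6) V_QLDT_le[OF d assms(4,5)] cmod_sum_offdiag_corr_sq_le[OF assms(4,5)]]
    by blast
  moreover obtain f' where "Agr d f' g \<ge> 1 / (?q ^ d * ((?q ^ d - 1) / (?q - 1))) * line_weight \<phi> g d"
    using exists_Agr_ge_line_weight[OF d assms(5)] by blast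
  ultimately show ?thesis unfolding line_weight_def by (blast intro: order_trans)
qed

end
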